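(* Let $a,b,x\ge0$ be integers and $p\in[0,1]$, $q=1-p$. If all transition probabilities $p(r,s)$, $r,s>0$, equal $p$, then $$B(a,b,x)=\sum_{t=0}^{x}\binom{a+b+x}{a+t}p^{a+t}q^{b+x-t}.$$
   Context: Constrained walks: let $p(r,s)\in[0,1]$ be given for all integers $r,s>0$. A walker at a lattice point $(r,s)$ with $r,s>0$ moves West to $(r-1,s)$ with probability $p(r,s)$ and South to $(r,s-1)$ with probability $1-p(r,s)$, independently of the past; a walker at a point $(r,0)$ with $r>0$ always moves West, and a walker at $(0,s)$ with $s>0$ always moves South, until the origin is reached. Two walkers $U$ and $L$ start at $(a,b+x+1)$ and $(a+x+1,b)$ respectively and move simultaneously and independently, one step per time unit. $B(a,b,x)$ is the probability that the first time the two walkers occupy the same lattice point is when they both reach the origin. *)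

theory Defs
  imports "HOL-Probability.Probability"
begin

definition walk_step :: "(nat \<Rightarrow> nat \<Rightarrow> real) \<Rightarrow> nat \<times> nat \<Rightarrow> (nat \<times> nat) pmf" where
  "walk_step P z = (case z of (r, s) \<Rightarrow>
     if 0 < r \<and> 0 < s then
       map_pmf (\<lambda>w. if w then (r - 1, s) else (r, s - 1)) (bernoulli_pmf (P r s))
     else if 0 < r then return_pmf (r - 1, 0)
     else if 0 < s then return_pmf (0, s - 1)
     else return_pmf (0, 0))"

primrec walk_path :: "(nat \<Rightarrow> nat \<Rightarrow> real) \<Rightarrow> nat \<Rightarrow> nat \<times> nat \<Rightarrow> (nat \<times> nat) list pmf" where
  "walk_path P 0 z = return_pmf [z]"
| "walk_path P (Suc n) z = bind_pmf (walk_step P z) (\<lambda>z'. map_pmf (Cons z) (walk_path P n z'))"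

text \<open>B(a,b,x): walkers U from (a,b+x+1) and L from (a+x+1,b) move independently and
  simultaneously; both reach the origin at time n = a+b+x+1. B is the probability that they
  occupy distinct points at all times t < n (so the first common point is the origin).\<close>
definition B :: "(nat \<Rightarrow> nat \<Rightarrow> real) \<Rightarrow> nat \<Rightarrow> nat \<Rightarrow> nat \<Rightarrow> real" where
  "B P a b x = (let n = a + b + x + 1 in
     measure_pmf.prob (pair_pmf (walk_path P n (a, b + x + 1)) (walk_path P n (a + x + 1, b)))
       {(us, ls). \<forall>i<n. us ! i \<noteq> ls ! i})"

end

theory Submission
  imports Defs
begin

text \<open>Let h(r,s) = exit_prob p (r,s) = P(Bin(r+s-1, p) < r), the probability that a single
  walker started at (r,s) makes at least s South steps among its first r+s-1 steps, i.e. reaches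
  the r-axis away from the origin. By Pascal's rule h is harmonic for the walk at every point of level r+s \<ge> 2.
  Two walkers on a common antidiagonal stay on a common antidiagonal, and as each step lowers the
  r-coordinate by at most one, the left walker cannot overtake the right one without meeting it.
  Conditioning on the first step, the probability that they do not meet before the origin and
  h(L) - h(U) therefore obey the same recursion and agree on level 1, so they are equal. For
  U = (a, b+x+1) and L = (a+x+1, b) this difference is P(a \<le> Bin(a+b+x, p) \<le> a+x).\<close>

lemma measure_pmf_prob_bind:
  "measure_pmf.prob (bind_pmf M f) A = (\<integral>x. measure_pmf.prob (f x) A \<partial>M)"
  unfolding measure_pmf_bind
  by (rule measure_pmf.measure_bind[where N="count_space UNIV"])
     (auto simp: measure_pmf_in_subprob_algebra)

lemma prob_binomial_pmf_Suc_lessThan_Suc: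
  assumes "0 \<le> p" "p \<le> 1"
  shows "measure_pmf.prob (binomial_pmf (Suc n) p) {..<Suc m} =
    p * measure_pmf.prob (binomial_pmf n p) {..<m} +
    (1 - p) * measure_pmf.prob (binomial_pmf n p) {..<Suc m}"
proof -
  have "(+) (Suc 0) -` {..<Suc m} = {..<m}" "(+) 0 -` {..<Suc m} = {..<Suc m}"
    by auto
  then show ?thesis
    using assms by (simp add: binomial_pmf_Suc measure_pmf_prob_bind bind_return_pmf' flip: map_pmf_def)
qed

lemma prob_binomial_pmf_lessThan_Suc_self:
  "0 \<le> p \<Longrightarrow> p \<le> 1 \<Longrightarrow> measure_pmf.prob (binomial_pmf n p) {..<Suc n} = 1"
  by (simp add: measure_pmf.prob_eq_1 AE_measure_pmf_iff set_pmf_binomial_eq)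

definition nonmeeting_prob :: "(nat \<Rightarrow> nat \<Rightarrow> real) \<Rightarrow> nat \<Rightarrow> nat \<times> nat \<Rightarrow> nat \<times> nat \<Rightarrow> real" where
  "nonmeeting_prob P n u l = measure_pmf.prob (pair_pmf (walk_path P n u) (walk_path P n l))
     {(us, ls). \<forall>i<n. us ! i \<noteq> ls ! i}"

lemma pair_walk_path_Suc:
  "pair_pmf (walk_path P (Suc n) u) (walk_path P (Suc n) l) =
     bind_pmf (walk_step P u) (\<lambda>u'. bind_pmf (walk_step P l) (\<lambda>l'.
       map_pmf (\<lambda>(us, ls). (u # us, l # ls)) (pair_pmf (walk_path P n u') (walk_path P n l'))))"
  unfolding pair_pmf_def walk_path.simps map_pmf_def bind_assoc_pmf bind_return_pmf
  by (subst bind_commute_pmf[of "walk_step P l"]) (simp add: bind_assoc_pmf bind_return_pmf)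

lemma nonmeeting_prob_0 [simp]: "nonmeeting_prob P 0 u l = 1"
  by (simp add: nonmeeting_prob_def)

lemma nonmeeting_prob_Suc:
  "nonmeeting_prob P (Suc n) u l =
     (if u = l then 0 else \<integral>u'. \<integral>l'. nonmeeting_prob P n u' l' \<partial>walk_step P l \<partial>walk_step P u)"
proof -
  have heads: "(\<lambda>(us, ls). (u # us, l # ls)) -` {(us, ls). \<forall>i<Suc n. us ! i \<noteq> ls ! i} =
      (if u = l then {} else {(us, ls). \<forall>i<n. us ! i \<noteq> ls ! i})"
    by (auto simp: All_less_Suc2)
  show ?thesis
    unfolding nonmeeting_prob_def pair_walk_path_Suc measure_pmf_prob_bind measure_map_pmf heads
    by (cases "u = l") simp_all
qed

lemma set_pmf_walk_step:
  assumes "z \<in> set_pmf (walk_step P (r, s))" "0 < r + s"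
  shows "0 < r \<and> z = (r - 1, s) \<or> 0 < s \<and> z = (r, s - 1)"
  using assms by (auto simp: walk_step_def split: if_splits)

lemma finite_set_pmf_walk_step: "finite (set_pmf (walk_step P z))"
proof -
  have "set_pmf (walk_step P z) \<subseteq> {(fst z - 1, snd z), (fst z, snd z - 1)}"
    by (auto simp: walk_step_def split: prod.splits if_splits)
  then show ?thesis
    by (rule finite_subset) simp
qed

fun exit_prob :: "real \<Rightarrow> nat \<times> nat \<Rightarrow> real" where
  "exit_prob p (r, s) = measure_pmf.prob (binomial_pmf (r + s - 1) p) {..<r}"

lemma exit_prob_harmonic:
  assumes p: "0 \<le> p" "p \<le> 1" and P: "\<And>r s. 0 < r \<Longrightarrow> 0 < s \<Longrightarrow> P r s = p"
    and "2 \<le> r + s"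
  shows "(\<integral>z. exit_prob p z \<partial>walk_step P (r, s)) = exit_prob p (r, s)"
proof -
  consider "r = 0" | "s = 0" | "0 < r" "0 < s"
    by blast
  then show ?thesis
  proof cases
    case 1
    then show ?thesis by (simp add: walk_step_def)
  next
    case 2
    then obtain n where "r = Suc (Suc n)"
      using \<open>2 \<le> r + s\<close> by (cases r; cases "r - 1") auto
    then show ?thesis
      using 2 p by (simp add: walk_step_def prob_binomial_pmf_lessThan_Suc_self)
  next
    case 3
    then obtain r' n where r: "r = Suc r'" and n: "r' + s = Suc n"
      by (cases r; cases s) auto
    have "exit_prob p (r, s) = measure_pmf.prob (binomial_pmf (Suc n) p) {..<Suc r'}"
      using r n by simp
    also have "\<dots> = p * measure_pmf.prob (binomial_pmf n p) {..<r'} +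
        (1 - p) * measure_pmf.prob (binomial_pmf n p) {..<Suc r'}"
      using p by (rule prob_binomial_pmf_Suc_lessThan_Suc)
    also have "\<dots> = P r s * exit_prob p (r - 1, s) + (1 - P r s) * exit_prob p (r, s - 1)"
      using 3 r n P by simp
    also have "\<dots> = (\<integral>z. exit_prob p z \<partial>walk_step P (r, s))"
      using 3 p P by (simp add: walk_step_def)
    finally show ?thesis ..
  qed
qed

lemma nonmeeting_prob_eq_exit_prob_diff:
  assumes p: "0 \<le> p" "p \<le> 1" and P: "\<And>r s. 0 < r \<Longrightarrow> 0 < s \<Longrightarrow> P r s = p"
    and "r < r'" "r + s = Suc n" "r' + s' = Suc n"
  shows "nonmeeting_prob P (Suc n) (r, s) (r', s') = exit_prob p (r', s') - exit_prob p (r, s)"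
  using assms(4-)
proof (induction n arbitrary: r s r' s')
  case 0
  then have "r = 0" "s = 1" "r' = 1" "s' = 0"
    by auto
  then show ?case
    using p by (simp add: nonmeeting_prob_Suc walk_step_def prob_binomial_pmf_lessThan_Suc_self)
next
  case (Suc n)
  have on_support: "nonmeeting_prob P (Suc n) u l = exit_prob p l - exit_prob p u"
    if u_step: "u \<in> set_pmf (walk_step P (r, s))" and l_step: "l \<in> set_pmf (walk_step P (r', s'))"
    for u l
  proof -
    obtain a b c d where u: "u = (a, b)" "a + b = Suc n" and l: "l = (c, d)" "c + d = Suc n"
      and "a \<le> c"
      using set_pmf_walk_step[OF u_step] set_pmf_walk_step[OF l_step] Suc.prems by fastforce
    show ?thesis
    proof (cases "a = c")
      case True
      then show ?thesis
        using u l by (simp add: nonmeeting_prob_Suc)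
    next
      case False
      then show ?thesis
        using Suc.IH \<open>a \<le> c\<close> u l by simp
    qed
  qed
  have "nonmeeting_prob P (Suc (Suc n)) (r, s) (r', s') =
      (\<integral>u. \<integral>l. nonmeeting_prob P (Suc n) u l \<partial>walk_step P (r', s') \<partial>walk_step P (r, s))"
    using Suc.prems by (subst nonmeeting_prob_Suc) simp
  also have "\<dots> = (\<integral>u. \<integral>l. exit_prob p l - exit_prob p u \<partial>walk_step P (r', s') \<partial>walk_step P (r, s))"
    using on_support by (intro integral_cong_AE AE_pmfI) simp_all
  also have "\<dots> = (\<integral>u. exit_prob p (r', s') - exit_prob p u \<partial>walk_step P (r, s))"
    using Suc.prems
    by (simp add: integrable_measure_pmf_finite finite_set_pmf_walk_step exit_prob_harmonic[OF p P])
  also have "\<dots> = exit_prob p (r', s') - exit_prob p (r, s)"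
    using Suc.prems
    by (simp add: integrable_measure_pmf_finite finite_set_pmf_walk_step exit_prob_harmonic[OF p P])
  finally show ?case .
qed

theorem mainTheorem14:
  fixes P :: "nat \<Rightarrow> nat \<Rightarrow> real" and p :: real and a b x :: nat
  assumes "0 \<le> p" and "p \<le> 1"
    and "\<And>r s. 0 < r \<Longrightarrow> 0 < s \<Longrightarrow> P r s = p"
  shows "B P a b x = (\<Sum>t = 0..x. real ((a + b + x) choose (a + t)) * p ^ (a + t) * (1 - p) ^ (b + x - t))"
proof -
  let ?N = "a + b + x"
  have "B P a b x = nonmeeting_prob P (Suc ?N) (a, b + x + 1) (a + x + 1, b)"
    by (simp add: B_def nonmeeting_prob_def)
  also have "\<dots> = exit_prob p (a + x + 1, b) - exit_prob p (a, b + x + 1)"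
    using assms by (intro nonmeeting_prob_eq_exit_prob_diff) auto
  also have "\<dots> = measure_pmf.prob (binomial_pmf ?N p) ({..<a + x + 1} - {..<a})"
    by (subst measure_pmf.finite_measure_Diff) (auto simp: add.commute add.left_commute)
  also have "{..<a + x + 1} - {..<a} = {a..a + x}"
    by auto
  also have "measure_pmf.prob (binomial_pmf ?N p) {a..a + x} = (\<Sum>t = 0..x. pmf (binomial_pmf ?N p) (a + t))"
    unfolding measure_measure_pmf_finite[OF finite_atLeastAtMost]
    by (subst sum.atLeastAtMost_shift_0) (simp_all add: comp_def)
  finally show ?thesis
    using assms by simp
qed

end
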